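(* Let $n\ge 5$, $k\in\{2,\dots,n-3\}$, $\gamma>0$, and let $0<x_1\le x_2\le\dots\le x_{n-1}$ be real numbers. Assume that $$x_I+x_{I^*}=2\gamma$$ for all $I\subset\{1,\dots,n-1\}$ with $|I|=k$, where $I^*:=\{n-i: i\in I\}$. Then $x_1=\dots=x_{n-1}$.
   Context: For $I\subset\{1,\dots,n-1\}$, $x_I:=\prod_{\iota\in I}x_\iota$ and $|I|$ is the cardinality of $I$. *)

theory Defs
  imports Complex_Main
begin

end

theory Submission
  imports Defs
begin

(* Write a = x 1, b = x (n-1), c = x 2, d = x (n-2); the reflection i |-> n - i swaps
   a with b and c with d and maps the middle {2..n-2} to itself.  Completing a fixed
   (k-2)-set J of {3..n-3} by one of {1, n-1} and one of {2, n-2}, the alternating sum of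
   the four balance equations is (c - d)(a - b)(x_J + x_{J*}) = 0, so monotonicity forces
   c = d and x is a constant t on the middle.  Completing (k, k-1, k-2)-sets of the middle
   by {}, {1}, {1, n-1} then gives t^k = (a + b) t^(k-1) / 2 = a b t^(k-2), i.e.
   a + b = 2 t and a b = t^2, whence a = b. *)

lemma prod_reflect_image:
  assumes "I \<subseteq> {..n}"
  shows "(\<Prod>i\<in>(\<lambda>i. n - i) ` I. f i) = (\<Prod>i\<in>I. f (n - i :: nat))"
proof -
  have "inj_on (\<lambda>i. n - i) {..n}"
    by (rule inj_onI) auto
  then show ?thesis
    using assms inj_on_subset by (metis prod.reindex_cong)
qed

locale reflection_balanced =
  fixes n k :: nat and \<gamma> :: real and x :: "nat \<Rightarrow> real"
  assumes n_ge: "n \<ge> 5"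
    and k_ge: "2 \<le> k" and k_le: "k \<le> n - 3"
    and x_1_pos: "0 < x 1"
    and mono: "\<And>i j. 1 \<le> i \<Longrightarrow> i \<le> j \<Longrightarrow> j \<le> n - 1 \<Longrightarrow> x i \<le> x j"
    and balanced: "\<And>I. I \<subseteq> {1..n-1} \<Longrightarrow> card I = k \<Longrightarrow>
           (\<Prod>i\<in>I. x i) + (\<Prod>i\<in>I. x (n - i)) = 2 * \<gamma>"
begin

lemma x_pos: "i \<in> {1..n-1} \<Longrightarrow> 0 < x i"
  using mono[of 1 i] x_1_pos by auto

lemma prod_x_pos: "J \<subseteq> {1..n-1} \<Longrightarrow> 0 < (\<Prod>i\<in>J. x i)"
  by (intro prod_pos x_pos) auto

lemma prod_x_reflect_pos: "J \<subseteq> {1..n-1} \<Longrightarrow> 0 < (\<Prod>i\<in>J. x (n - i))"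
  by (intro prod_pos x_pos) (auto simp: subset_eq)

lemma balanced_union:
  assumes "E \<subseteq> {1..n-1}" "J \<subseteq> {1..n-1}" "E \<inter> J = {}" "card E + card J = k"
  shows "(\<Prod>i\<in>E. x i) * (\<Prod>i\<in>J. x i)
           + (\<Prod>i\<in>E. x (n - i)) * (\<Prod>i\<in>J. x (n - i)) = 2 * \<gamma>"
proof -
  have "finite E" "finite J"
    using assms(1,2) finite_subset by blast+
  then show ?thesis
    using balanced[of "E \<union> J"] assms by (simp add: card_Un_disjoint prod.union_disjoint)
qed

lemma inner_ends_eq: "x 2 = x (n - 2)"
proof -
  have "k - 2 \<le> card {3..n-3}"
    using k_le by simp
  then obtain J where J: "J \<subseteq> {3..n-3}" "card J = k - 2"
    by (meson obtain_subset_with_card_n)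
  define a b c d where "a = x 1" "b = x (n - 1)" "c = x 2" "d = x (n - 2)"
  define P Q where "P = (\<Prod>i\<in>J. x i)" "Q = (\<Prod>i\<in>J. x (n - i))"
  have reflect: "n - (n - 1) = 1" "n - (n - 2) = 2"
    using n_ge by auto
  have eq: "x e * x f * P + x (n - e) * x (n - f) * Q = 2 * \<gamma>"
    if "e \<in> {1, n - 1}" "f \<in> {2, n - 2}" for e f
  proof -
    have "{e, f} \<subseteq> {1..n-1}" "J \<subseteq> {1..n-1}" "{e, f} \<inter> J = {}" "e \<noteq> f"
      using that J n_ge by (auto simp: subset_eq)
    then show ?thesis
      using balanced_union[of "{e, f}" J] J k_ge unfolding P_Q_def by simp
  qed
  have "a * c * P + b * d * Q = 2 * \<gamma>" "a * d * P + b * c * Q = 2 * \<gamma>"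
    "b * c * P + a * d * Q = 2 * \<gamma>" "b * d * P + a * c * Q = 2 * \<gamma>"
    using eq[of 1 2] eq[of 1 "n - 2"] eq[of "n - 1" 2] eq[of "n - 1" "n - 2"]
    unfolding a_b_c_d_def reflect by simp_all
  then have "(c - d) * (a - b) * (P + Q) = 0"
    by algebra
  moreover have "P + Q > 0"
  proof -
    have "J \<subseteq> {1..n-1}"
      using J(1) by (auto simp: subset_eq)
    then show ?thesis
      using prod_x_pos prod_x_reflect_pos unfolding P_Q_def by (simp add: add_pos_pos)
  qed
  moreover have "a \<le> c" "c \<le> d" "d \<le> b"
    unfolding a_b_c_d_def using n_ge by (auto intro: mono)
  ultimately show ?thesis
    unfolding a_b_c_d_def by auto
qed

lemma middle_const:
  assumes "i \<in> {2..n-2}"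
  shows "x i = x 2"
proof -
  have "x 2 \<le> x i" "x i \<le> x (n - 2)"
    using assms n_ge by (auto intro: mono)
  then show ?thesis
    using inner_ends_eq by simp
qed

lemma prod_middle:
  assumes "J \<subseteq> {2..n-2}"
  shows "(\<Prod>i\<in>J. x i) = x 2 ^ card J" and "(\<Prod>i\<in>J. x (n - i)) = x 2 ^ card J"
proof -
  have "x i = x 2" "x (n - i) = x 2" if "i \<in> J" for i
    using subsetD[OF assms that] by (auto intro!: middle_const)
  then show "(\<Prod>i\<in>J. x i) = x 2 ^ card J" "(\<Prod>i\<in>J. x (n - i)) = x 2 ^ card J"
    by (simp_all cong: prod.cong)
qed

lemma balanced_ends:
  assumes "E \<subseteq> {1, n - 1}"
  shows "(\<Prod>i\<in>E. x i) * x 2 ^ (k - card E) + (\<Prod>i\<in>E. x (n - i)) * x 2 ^ (k - card E)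
           = 2 * \<gamma>"
proof -
  have "card E \<le> card {1, n - 1}"
    using assms by (intro card_mono) auto
  also have "\<dots> = 2"
    using n_ge by simp
  finally have "card E \<le> 2" .
  then have "k - card E \<le> card {2..n-2}"
    using k_le by simp
  then obtain J where J: "J \<subseteq> {2..n-2}" "card J = k - card E"
    by (meson obtain_subset_with_card_n)
  have "E \<subseteq> {1..n-1}" "J \<subseteq> {1..n-1}" "E \<inter> J = {}" "card E + card J = k"
    using assms J \<open>card E \<le> 2\<close> k_ge n_ge by (fastforce simp: subset_eq)+
  then show ?thesis
    using balanced_union prod_middle[OF J(1)] J(2) by metis
qed

lemma outer_ends_eq: "x 1 = x (n - 1)"
proof -
  define a b t where "a = x 1" "b = x (n - 1)" "t = x 2"
  have "t > 0"
    unfolding a_b_t_def using x_pos n_ge by simp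
  have reflect: "n - (n - 1) = 1"
    using n_ge by simp
  have middle: "t ^ k + t ^ k = 2 * \<gamma>"
    and one_end: "a * t ^ (k - 1) + b * t ^ (k - 1) = 2 * \<gamma>"
    and both_ends: "a * b * t ^ (k - 2) + b * a * t ^ (k - 2) = 2 * \<gamma>"
    using balanced_ends[of "{}"] balanced_ends[of "{1}"] balanced_ends[of "{1, n - 1}"]
    unfolding a_b_t_def using n_ge by (simp_all add: reflect numeral_2_eq_2)
  have "t ^ k = t * t ^ (k - 1)" "t ^ k = t\<^sup>2 * t ^ (k - 2)"
    using k_ge by (simp flip: power_Suc) (metis k_ge le_add_diff_inverse power_add)
  then have "\<gamma> = t * t ^ (k - 1)" "\<gamma> = t\<^sup>2 * t ^ (k - 2)"
    using middle by simp_all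
  then have "(a + b) * t ^ (k - 1) = (2 * t) * t ^ (k - 1)"
    "(a * b) * t ^ (k - 2) = t\<^sup>2 * t ^ (k - 2)"
    using one_end both_ends by (simp_all add: algebra_simps)
  then have "a + b = 2 * t" "a * b = t\<^sup>2"
    using \<open>t > 0\<close> by simp_all
  then have "(a - b)\<^sup>2 = 0"
    by algebra
  then show ?thesis
    unfolding a_b_t_def by simp
qed

lemma x_const: "i \<in> {1..n-1} \<Longrightarrow> x i = x 1"
  using mono[of 1 i] mono[of i "n - 1"] outer_ends_eq by auto

end

theorem lemma5p1:
  fixes n k :: nat and \<gamma> :: real and x :: "nat \<Rightarrow> real"
  assumes "n \<ge> 5"
    and "2 \<le> k" and "k \<le> n - 3"
    and "\<gamma> > 0"
    and "0 < x 1"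
    and "\<And>i j. 1 \<le> i \<Longrightarrow> i \<le> j \<Longrightarrow> j \<le> n - 1 \<Longrightarrow> x i \<le> x j"
    and "\<And>I. I \<subseteq> {1..n-1} \<Longrightarrow> card I = k \<Longrightarrow>
           (\<Prod>i\<in>I. x i) + (\<Prod>i\<in>(\<lambda>i. n - i) ` I. x i) = 2 * \<gamma>"
  shows "\<forall>i\<in>{1..n-1}. x i = x 1"
proof -
  have "(\<Prod>i\<in>I. x i) + (\<Prod>i\<in>I. x (n - i)) = 2 * \<gamma>"
    if "I \<subseteq> {1..n-1}" "card I = k" for I
  proof -
    have "I \<subseteq> {..n}"
      using that(1) by (auto simp: subset_eq)
    then show ?thesis
      using assms(7)[OF that] prod_reflect_image[of I n x] by simp
  qed
  then interpret reflection_balanced n k \<gamma> x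
    using assms by unfold_locales auto
  show ?thesis
    using x_const by blast
qed

end
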